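(* Let $(a_0,\ldots,a_n)$ be a finite sequence of positive integers and $m\ge 1$ an integer. For a positive integer $N$ let $\beta^N$ be the number whose continued fraction digits (indexed from $0$) are $a_0,\ldots,a_n$ in positions $0,\ldots,n$, $N$ in position $n+m$, and $1$ in all other positions. Then for every positive integer $N$: (1) for $0\le i\le n+m$, $\left|\log\frac{\alpha_i(\beta^N)}{\alpha_i(\beta^{N+1})}\right|<2^{i-(n+m)}/N$; (2) for $0\le i<n+m$, $\left|\log\frac{\alpha_i(\beta^N)}{\alpha_i(\beta^1)}\right|<2^{i-(n+m)}$; (3) for $0\le i<n+m$, $\left|\log\frac{\log(1/\alpha_i(\beta^N))}{\log(1/\alpha_i(\beta^{N+1}))}\right|<2^{i-(n+m)+1}$; (4) for $0\le i<n+m-1$, $\left|\log\frac{\log(1/\alpha_i(\beta^N))}{\log(1/\alpha_i(\beta^1))}\right|<2^{i-(n+m)+1}$.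
   Context: For positive integers $d_0,d_1,\ldots$, $[d_0,d_1,d_2,\ldots]$ denotes the continued fraction $\cfrac{1}{d_0+\cfrac{1}{d_1+\cfrac{1}{d_2+\cdots}}}$, and for $\beta=[d_0,d_1,\ldots]$ we write $\alpha_j(\beta)=[d_j,d_{j+1},\ldots]$. *)

theory Defs
  imports Complex_Main
begin

fun cf_fin :: "(nat \<Rightarrow> nat) \<Rightarrow> nat \<Rightarrow> real" where
  "cf_fin d 0 = 0"
| "cf_fin d (Suc k) = 1 / (real (d 0) + cf_fin (\<lambda>j. d (Suc j)) k)"

definition cf_val :: "(nat \<Rightarrow> nat) \<Rightarrow> real" where
  "cf_val d = lim (\<lambda>k. cf_fin d k)"

definition cf_alpha :: "(nat \<Rightarrow> nat) \<Rightarrow> nat \<Rightarrow> real" where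
  "cf_alpha d j = cf_val (\<lambda>k. d (j + k))"

definition beta_digits :: "(nat \<Rightarrow> nat) \<Rightarrow> nat \<Rightarrow> nat \<Rightarrow> nat \<Rightarrow> nat \<Rightarrow> nat" where
  "beta_digits a n m N k = (if k \<le> n then a k else if k = n + m then N else 1)"

end

(*
  Every digit is at least 1 and the digits are eventually 1, so the tails satisfy
  alpha_i = 1 / (d_i + alpha_(i+1)) and lie in (0, 1].  For d >= 1 the map x |-> 1 / (d + x)
  halves logarithmic distances on (0, 1], because ((d + a) / (d + b))^2 <= a / b for b <= a <= 1;
  likewise |ln (ln (d + a) / ln (d + b))| <= |ln (a / b)|.  The sequences beta^N, beta^(N+1)
  and beta^1 differ only in digit n + m, where alpha_(n+m)(beta^N) = 1 / (N + phi) with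
  phi = (sqrt 5 - 1) / 2 = [1, 1, 1, ...]; the two log-ratios there are below 1/N and (one
  step earlier, where the ratio is at most 1 + phi < e^(1/2)) below 1/2.  Halving back to
  position i gives the factor 2^(i - (n + m)), and the double-logarithm bounds follow from
  the bounds one position further on.
*)

theory Submission
  imports Defs
begin

definition golden_inv :: real where
  "golden_inv = (sqrt 5 - 1) / 2"

lemma golden_inv_pos: "0 < golden_inv"
  by (simp add: golden_inv_def real_less_rsqrt)

lemma golden_inv_fixpoint: "1 / (1 + golden_inv) = golden_inv"
proof -
  have "golden_inv * (1 + golden_inv) = 1"
    by (simp add: golden_inv_def field_simps)
  then show ?thesis
    using golden_inv_pos by (simp add: divide_eq_eq add_pos_pos mult.commute)
qed

lemma one_plus_golden_inv_lt_exp_half: "1 + golden_inv < exp (1 / 2)"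
proof -
  have "sqrt 5 < 2.24"
    by (rule real_less_lsqrt) (simp_all add: power2_eq_square)
  then have "1 + golden_inv < (17 / 16) ^ 8"
    by (simp add: golden_inv_def power_divide)
  also have "(17 / 16) ^ 8 = (1 + (1 / 2) / real 8) ^ 8"
    by simp
  also have "\<dots> \<le> exp (1 / 2)"
    by (rule exp_ge_one_plus_x_over_n_power_n) simp_all
  finally show ?thesis .
qed

lemma cf_fin_nonneg: "0 \<le> cf_fin d k"
  by (induction k arbitrary: d) simp_all

lemma cf_fin_LIMSEQ_Cons:
  assumes "(\<lambda>k. cf_fin (\<lambda>j. d (Suc j)) k) \<longlonglongrightarrow> L" and "d 0 \<ge> 1"
  shows "(\<lambda>k. cf_fin d k) \<longlonglongrightarrow> 1 / (real (d 0) + L)"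
proof -
  have "L \<ge> 0"
    using assms(1) by (rule LIMSEQ_le_const) (simp add: cf_fin_nonneg)
  then have "(\<lambda>k. 1 / (real (d 0) + cf_fin (\<lambda>j. d (Suc j)) k)) \<longlonglongrightarrow> 1 / (real (d 0) + L)"
    using assms by (intro tendsto_intros) auto
  then show ?thesis
    by (simp add: filterlim_sequentially_Suc[symmetric, where f = "cf_fin d"])
qed

lemma cf_fin_ones_LIMSEQ: "(\<lambda>k. cf_fin (\<lambda>_. 1) k) \<longlonglongrightarrow> golden_inv"
proof -
  define c where "c k = cf_fin (\<lambda>_. 1) k" for k
  define q where "q = 1 / (1 + golden_inv)"
  have q: "0 < q" "q < 1"
    using golden_inv_pos by (simp_all add: q_def)
  have contract: "\<bar>c (Suc k) - golden_inv\<bar> \<le> q * \<bar>c k - golden_inv\<bar>" for k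
  proof -
    have ck: "0 \<le> c k"
      by (simp add: c_def cf_fin_nonneg)
    have "c (Suc k) - golden_inv = 1 / (1 + c k) - 1 / (1 + golden_inv)"
      by (subst golden_inv_fixpoint[symmetric]) (simp add: c_def)
    also have "\<dots> = (golden_inv - c k) / ((1 + c k) * (1 + golden_inv))"
      using ck golden_inv_pos by (simp add: field_simps)
    finally have "\<bar>c (Suc k) - golden_inv\<bar> = q * (\<bar>c k - golden_inv\<bar> / (1 + c k))"
      using ck golden_inv_pos by (simp add: q_def abs_minus_commute abs_mult)
    also have "\<dots> \<le> q * \<bar>c k - golden_inv\<bar>"
      using ck q by (intro mult_left_mono) (auto simp: divide_le_eq mult_le_cancel_left1)
    finally show ?thesis .
  qed
  have "\<bar>c k - golden_inv\<bar> \<le> q ^ k * golden_inv" for k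
  proof (induction k)
    case 0
    then show ?case
      using golden_inv_pos by (simp add: c_def)
  next
    case (Suc k)
    have "\<bar>c (Suc k) - golden_inv\<bar> \<le> q * \<bar>c k - golden_inv\<bar>"
      by (rule contract)
    also have "\<dots> \<le> q * (q ^ k * golden_inv)"
      using Suc q by (intro mult_left_mono) auto
    finally show ?case
      by (simp add: mult.assoc)
  qed
  then have "\<forall>\<^sub>F k in sequentially. norm (c k - golden_inv) \<le> norm (q ^ k * golden_inv) * 1"
    using q golden_inv_pos by (intro always_eventually) simp
  moreover have "(\<lambda>k. q ^ k * golden_inv) \<longlonglongrightarrow> 0"
    using q by (intro tendsto_mult_left_zero LIMSEQ_power_zero) simp
  ultimately have "(\<lambda>k. c k - golden_inv) \<longlonglongrightarrow> 0"
    by (rule tendsto_0_le[rotated])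
  then show ?thesis
    by (simp add: c_def LIM_zero_iff)
qed

lemma cf_alpha_eqI:
  assumes "(\<lambda>k. cf_fin (\<lambda>t. d (j + t)) k) \<longlonglongrightarrow> L"
  shows "cf_alpha d j = L"
  using assms by (simp add: cf_alpha_def cf_val_def limI)

context
  fixes d :: "nat \<Rightarrow> nat" and M :: nat
  assumes digits_pos: "\<And>k. d k \<ge> 1"
    and digits_eventually_one: "\<And>k. k \<ge> M \<Longrightarrow> d k = 1"
begin

lemma cf_fin_eventually_LIMSEQ:
  assumes "j \<ge> M"
  shows "(\<lambda>k. cf_fin (\<lambda>t. d (j + t)) k) \<longlonglongrightarrow> golden_inv"
proof -
  have "(\<lambda>t. d (j + t)) = (\<lambda>_. 1)"
    using assms digits_eventually_one by auto
  then show ?thesis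
    using cf_fin_ones_LIMSEQ by simp
qed

lemma cf_alpha_eventually: "j \<ge> M \<Longrightarrow> cf_alpha d j = golden_inv"
  by (intro cf_alpha_eqI cf_fin_eventually_LIMSEQ)

lemma cf_alpha_LIMSEQ: "(\<lambda>k. cf_fin (\<lambda>t. d (j + t)) k) \<longlonglongrightarrow> cf_alpha d j"
proof (induction "M - j" arbitrary: j)
  case 0
  then show ?case
    using cf_fin_eventually_LIMSEQ cf_alpha_eventually by simp
next
  case (Suc r)
  have "(\<lambda>k. cf_fin (\<lambda>t. d (Suc j + t)) k) \<longlonglongrightarrow> cf_alpha d (Suc j)"
    using Suc.hyps(1)[of "Suc j"] Suc.hyps(2) by simp
  then have "(\<lambda>k. cf_fin (\<lambda>t. d (j + t)) k) \<longlonglongrightarrow> 1 / (real (d j) + cf_alpha d (Suc j))"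
    using cf_fin_LIMSEQ_Cons[of "\<lambda>t. d (j + t)"] digits_pos by simp
  then show ?case
    by (metis cf_alpha_eqI)
qed

lemma cf_alpha_Suc: "cf_alpha d j = 1 / (real (d j) + cf_alpha d (Suc j))"
proof -
  have "(\<lambda>k. cf_fin (\<lambda>t. d (j + t)) k) \<longlonglongrightarrow> 1 / (real (d j) + cf_alpha d (Suc j))"
    using cf_fin_LIMSEQ_Cons[of "\<lambda>t. d (j + t)"] cf_alpha_LIMSEQ[of "Suc j"] digits_pos by simp
  then show ?thesis
    by (rule cf_alpha_eqI)
qed

lemma cf_alpha_nonneg: "0 \<le> cf_alpha d j"
  using cf_alpha_LIMSEQ by (rule LIMSEQ_le_const) (simp add: cf_fin_nonneg)

lemma cf_alpha_pos: "0 < cf_alpha d j"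
  using cf_alpha_Suc[of j] digits_pos[of j] cf_alpha_nonneg[of "Suc j"] by simp

lemma cf_alpha_le_one: "cf_alpha d j \<le> 1"
  using cf_alpha_Suc[of j] digits_pos[of j] cf_alpha_nonneg[of "Suc j"] by simp

end

lemma abs_ln_divide_commute:
  fixes x y :: real
  assumes "0 < x" "0 < y"
  shows "\<bar>ln (x / y)\<bar> = \<bar>ln (y / x)\<bar>"
  using assms by (simp add: ln_div)

lemma ln_shift_ratio_le_half:
  fixes d a b :: real
  assumes "d \<ge> 1" "0 < b" "b \<le> a" "a \<le> 1"
  shows "ln ((d + a) / (d + b)) \<le> ln (a / b) / 2"
proof -
  have pos: "0 < d + b" "0 < (d + a) / (d + b)"
    using assms by auto
  have "a * b \<le> 1"
    using assms by (intro mult_le_one) auto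
  also have "1 \<le> d\<^sup>2"
    using assms by (simp add: one_le_power)
  finally have "(a - b) * (a * b - d\<^sup>2) \<le> 0"
    using assms by (intro mult_nonneg_nonpos) auto
  then have "(d + a)\<^sup>2 * b \<le> (d + b)\<^sup>2 * a"
    by (simp add: power2_eq_square algebra_simps)
  then have "((d + a) / (d + b))\<^sup>2 \<le> a / b"
    using pos assms by (simp add: power_divide divide_simps mult.commute)
  then have "ln (((d + a) / (d + b))\<^sup>2) \<le> ln (a / b)"
    using pos assms by (subst ln_le_cancel_iff) auto
  then show ?thesis
    using pos by (simp add: ln_realpow)
qed

lemma abs_ln_shift_ratio_le_half:
  fixes d a b :: real
  assumes "d \<ge> 1" "0 < a" "a \<le> 1" "0 < b" "b \<le> 1"
  shows "\<bar>ln ((d + a) / (d + b))\<bar> \<le> \<bar>ln (a / b)\<bar> / 2"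
proof (cases "b \<le> a")
  case True
  then show ?thesis
    using ln_shift_ratio_le_half[of d b a] assms by simp
next
  case False
  then have "ln ((d + b) / (d + a)) \<le> ln (b / a) / 2"
    using ln_shift_ratio_le_half[of d a b] assms by simp
  then show ?thesis
    using False assms abs_ln_divide_commute[of a b] abs_ln_divide_commute[of "d + a" "d + b"] by simp
qed

lemma ln_shift_ratio_le:
  fixes d a b :: real
  assumes "d \<ge> 1" "0 < b" "b \<le> a"
  shows "ln (d + a) / ln (d + b) \<le> a / b"
proof -
  have pos: "1 < d + b" "0 < ln (d + b)"
    using assms by auto
  have "ln (d + a) - ln (d + b) = ln ((d + a) / (d + b))"
    using pos assms by (simp add: ln_div)
  also have "\<dots> \<le> (d + a) / (d + b) - 1"
    using pos assms by (intro ln_le_minus_one) simp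
  also have "\<dots> = (a - b) / (d + b)"
    using pos by (simp add: field_simps)
  finally have diff: "ln (d + a) - ln (d + b) \<le> (a - b) / (d + b)" .
  have "b / (d + b) \<le> (d + b - 1) / (d + b)"
    using pos assms by (intro divide_right_mono) auto
  also have "\<dots> = 1 - 1 / (d + b)"
    using pos by (simp add: field_simps)
  also have "\<dots> \<le> ln (d + b)"
    using ln_le_minus_one[of "1 / (d + b)"] pos by (simp add: ln_div)
  finally have ln_lower: "b / (d + b) \<le> ln (d + b)" .
  have "(ln (d + a) - ln (d + b)) * b \<le> (a - b) / (d + b) * b"
    using diff assms by (intro mult_right_mono) auto
  also have "\<dots> = (a - b) * (b / (d + b))"
    by simp
  also have "\<dots> \<le> (a - b) * ln (d + b)"
    using ln_lower assms by (intro mult_left_mono) auto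
  finally have "(ln (d + a) - ln (d + b)) * b \<le> (a - b) * ln (d + b)" .
  then show ?thesis
    using pos assms by (simp add: divide_simps algebra_simps)
qed

lemma abs_ln_ln_shift_ratio_le:
  fixes d a b :: real
  assumes "d \<ge> 1" "0 < a" "0 < b"
  shows "\<bar>ln (ln (d + a) / ln (d + b))\<bar> \<le> \<bar>ln (a / b)\<bar>"
proof -
  have ordered: "\<bar>ln (ln (d + x) / ln (d + y))\<bar> \<le> \<bar>ln (x / y)\<bar>" if "0 < y" "y \<le> x" for x y
  proof -
    have "1 \<le> ln (d + x) / ln (d + y)"
      using assms that by simp
    moreover have "ln (d + x) / ln (d + y) \<le> x / y"
      using ln_shift_ratio_le assms that by blast
    ultimately show ?thesis
      using that by simp
  qed
  show ?thesis
  proof (cases "b \<le> a")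
    case True
    then show ?thesis
      using ordered assms by simp
  next
    case False
    then show ?thesis
      using ordered[of a b] assms abs_ln_divide_commute[of a b]
        abs_ln_divide_commute[of "ln (d + a)" "ln (d + b)"] by simp
  qed
qed

lemma ln_add_one_divide_le:
  fixes x :: real
  assumes "0 < x"
  shows "ln ((x + 1) / x) \<le> 1 / x"
  using ln_add_one_self_le_self[of "1 / x"] assms by (simp add: field_simps)

lemma ln_golden_inv_shift_ratio_lt_half:
  fixes d u :: real
  assumes "d \<ge> 1" "0 \<le> u"
  shows "ln ((d + golden_inv) / (d + u)) < 1 / 2"
proof -
  have "(d + golden_inv) / (d + u) \<le> (d + golden_inv) / d"
    using assms golden_inv_pos by (intro divide_left_mono) auto
  also have "\<dots> \<le> 1 + golden_inv"
    using assms golden_inv_pos by (simp add: field_simps)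
  also have "\<dots> < exp (1 / 2)"
    by (rule one_plus_golden_inv_lt_exp_half)
  finally have "ln ((d + golden_inv) / (d + u)) < ln (exp (1 / 2))"
    using assms golden_inv_pos by (subst ln_less_cancel_iff) auto
  then show ?thesis
    by simp
qed

lemma halving_bound:
  fixes f :: "nat \<Rightarrow> real"
  assumes "f K < c" and "\<And>i. i < K \<Longrightarrow> f i \<le> f (Suc i) / 2" and "i \<le> K"
  shows "f i < c * 2 powr (real i - real K)"
  using assms(3)
proof (induction rule: inc_induct)
  case base
  then show ?case
    using assms(1) by simp
next
  case (step i)
  have "f i \<le> f (Suc i) / 2"
    using assms(2) step.hyps(2) .
  also have "\<dots> < c * 2 powr (real (Suc i) - real K) / 2"
    using step.IH by simp
  also have "\<dots> = c * 2 powr (real i - real K)"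
    by (simp add: powr_diff powr_add)
  finally show ?case .
qed

context
  fixes a :: "nat \<Rightarrow> nat" and n m :: nat
  assumes apos: "\<forall>k\<le>n. a k > 0" and m: "m \<ge> 1"
begin

abbreviation alpha :: "nat \<Rightarrow> nat \<Rightarrow> real" where
  "alpha N i \<equiv> cf_alpha (beta_digits a n m N) i"

lemma beta_digits_off_last: "k \<noteq> n + m \<Longrightarrow> beta_digits a n m N k = beta_digits a n m N' k"
  by (simp add: beta_digits_def)

lemma beta_digits_ge_one: "N \<ge> 1 \<Longrightarrow> beta_digits a n m N k \<ge> 1"
  using apos by (auto simp: beta_digits_def Suc_leI)

lemma beta_digits_eventually_one: "k \<ge> Suc (n + m) \<Longrightarrow> beta_digits a n m N k = 1"
  by (simp add: beta_digits_def)

lemma alpha_Suc: "N \<ge> 1 \<Longrightarrow> alpha N i = 1 / (real (beta_digits a n m N i) + alpha N (Suc i))"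
  by (rule cf_alpha_Suc[OF beta_digits_ge_one beta_digits_eventually_one])

lemma alpha_pos: "N \<ge> 1 \<Longrightarrow> 0 < alpha N i"
  by (rule cf_alpha_pos[OF beta_digits_ge_one beta_digits_eventually_one])

lemma alpha_le_one: "N \<ge> 1 \<Longrightarrow> alpha N i \<le> 1"
  by (rule cf_alpha_le_one[OF beta_digits_ge_one beta_digits_eventually_one])

lemma alpha_tail: "N \<ge> 1 \<Longrightarrow> alpha N (Suc (n + m)) = golden_inv"
  by (rule cf_alpha_eventually[OF beta_digits_ge_one beta_digits_eventually_one]) auto

lemma alpha_last: "N \<ge> 1 \<Longrightarrow> alpha N (n + m) = 1 / (real N + golden_inv)"
  using alpha_Suc[of N "n + m"] alpha_tail m by (simp add: beta_digits_def)

lemma abs_ln_alpha_ratio_halves: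
  assumes "N \<ge> 1" "N' \<ge> 1" "i < n + m"
  shows "\<bar>ln (alpha N i / alpha N' i)\<bar> \<le> \<bar>ln (alpha N (Suc i) / alpha N' (Suc i))\<bar> / 2"
proof -
  define d where "d = real (beta_digits a n m N i)"
  have "alpha N i / alpha N' i = (d + alpha N' (Suc i)) / (d + alpha N (Suc i))"
    using alpha_Suc[OF assms(1), of i] alpha_Suc[OF assms(2), of i] alpha_pos assms
      beta_digits_off_last[of i N' N]
    by (simp add: d_def add_pos_pos)
  moreover have "\<bar>ln ((d + alpha N' (Suc i)) / (d + alpha N (Suc i)))\<bar>
      \<le> \<bar>ln (alpha N' (Suc i) / alpha N (Suc i))\<bar> / 2"
    using assms beta_digits_ge_one alpha_pos alpha_le_one
    by (intro abs_ln_shift_ratio_le_half) (simp_all add: d_def)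
  ultimately show ?thesis
    using abs_ln_divide_commute alpha_pos assms by metis
qed

lemma abs_ln_ln_inverse_alpha_ratio_le:
  assumes "N \<ge> 1" "N' \<ge> 1" "i < n + m"
  shows "\<bar>ln (ln (1 / alpha N i) / ln (1 / alpha N' i))\<bar> \<le> \<bar>ln (alpha N (Suc i) / alpha N' (Suc i))\<bar>"
proof -
  define d where "d = real (beta_digits a n m N i)"
  have "1 / alpha N i = d + alpha N (Suc i)" "1 / alpha N' i = d + alpha N' (Suc i)"
    using alpha_Suc[OF assms(1), of i] alpha_Suc[OF assms(2), of i] assms
      beta_digits_off_last[of i N' N]
    by (simp_all add: d_def)
  then show ?thesis
    using assms beta_digits_ge_one alpha_pos
    by (simp only:) (intro abs_ln_ln_shift_ratio_le, simp_all add: d_def)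
qed

lemma abs_ln_alpha_Suc_ratio_less:
  assumes "N \<ge> 1" "i \<le> n + m"
  shows "\<bar>ln (alpha N i / alpha (N + 1) i)\<bar> < 2 powr (real i - real (n + m)) / real N"
proof -
  have "alpha N (n + m) / alpha (N + 1) (n + m) = (real N + golden_inv + 1) / (real N + golden_inv)"
  proof -
    have "alpha (N + 1) (n + m) = 1 / (real N + golden_inv + 1)"
      using alpha_last[of "N + 1"] by (simp add: ac_simps)
    then show ?thesis
      unfolding alpha_last[OF assms(1)] using golden_inv_pos by (simp add: add_pos_pos)
  qed
  moreover have "ln ((real N + golden_inv + 1) / (real N + golden_inv)) \<le> 1 / (real N + golden_inv)"
    using assms golden_inv_pos by (intro ln_add_one_divide_le) simp
  moreover have "1 / (real N + golden_inv) < 1 / real N"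
    using assms golden_inv_pos by (simp add: divide_strict_left_mono)
  ultimately have "\<bar>ln (alpha N (n + m) / alpha (N + 1) (n + m))\<bar> < 1 / real N"
    using golden_inv_pos by simp
  then have "\<bar>ln (alpha N i / alpha (N + 1) i)\<bar> < 1 / real N * 2 powr (real i - real (n + m))"
    using assms abs_ln_alpha_ratio_halves by (intro halving_bound[where f = "\<lambda>i. \<bar>ln (alpha N i / alpha (N + 1) i)\<bar>"]) simp_all
  then show ?thesis
    by simp
qed

lemma abs_ln_alpha_one_ratio_less:
  assumes "N \<ge> 1" "i < n + m"
  shows "\<bar>ln (alpha N i / alpha 1 i)\<bar> < 2 powr (real i - real (n + m))"
proof -
  obtain k where k: "n + m = Suc k"
    using m by (cases m) auto
  define d where "d = real (beta_digits a n m N k)"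
  define u where "u = 1 / (real N + golden_inv)"
  have "u \<le> 1 / (1 + golden_inv)"
    unfolding u_def using assms golden_inv_pos by (intro divide_left_mono) auto
  then have u: "0 < u" "u \<le> golden_inv"
    using assms golden_inv_pos by (simp_all add: u_def add_pos_pos golden_inv_fixpoint)
  have "alpha N k = 1 / (d + u)" "alpha 1 k = 1 / (d + golden_inv)"
    using alpha_Suc[OF assms(1), of k] alpha_Suc[of 1 k] alpha_last assms k
      beta_digits_off_last[of k 1 N]
    by (simp_all add: d_def u_def golden_inv_fixpoint)
  then have "alpha N k / alpha 1 k = (d + golden_inv) / (d + u)"
    using u beta_digits_ge_one[OF assms(1)] by (simp add: d_def add_pos_pos)
  moreover have "ln ((d + golden_inv) / (d + u)) < 1 / 2"
    using u beta_digits_ge_one[OF assms(1)] by (intro ln_golden_inv_shift_ratio_lt_half) (simp_all add: d_def)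
  moreover have "0 \<le> ln ((d + golden_inv) / (d + u))"
    using u beta_digits_ge_one[OF assms(1)] by (simp add: d_def add_pos_pos)
  ultimately have "\<bar>ln (alpha N k / alpha 1 k)\<bar> < 1 / 2"
    by simp
  then have "\<bar>ln (alpha N i / alpha 1 i)\<bar> < 1 / 2 * 2 powr (real i - real k)"
    using assms k abs_ln_alpha_ratio_halves
    by (intro halving_bound[where f = "\<lambda>i. \<bar>ln (alpha N i / alpha 1 i)\<bar>"]) simp_all
  then show ?thesis
    using k by (simp add: powr_diff powr_add)
qed

lemma abs_ln_ln_inverse_alpha_Suc_ratio_less:
  assumes "N \<ge> 1" "i < n + m"
  shows "\<bar>ln (ln (1 / alpha N i) / ln (1 / alpha (N + 1) i))\<bar> < 2 powr (real i - real (n + m) + 1)"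
proof -
  have "\<bar>ln (ln (1 / alpha N i) / ln (1 / alpha (N + 1) i))\<bar>
      \<le> \<bar>ln (alpha N (Suc i) / alpha (N + 1) (Suc i))\<bar>"
    using assms by (intro abs_ln_ln_inverse_alpha_ratio_le) simp_all
  also have "\<dots> < 2 powr (real (Suc i) - real (n + m)) / real N"
    using assms by (intro abs_ln_alpha_Suc_ratio_less) simp_all
  also have "\<dots> \<le> 2 powr (real i - real (n + m) + 1)"
    using assms by (simp add: divide_le_eq mult_le_cancel_left1 add.commute add_diff_eq)
  finally show ?thesis .
qed

lemma abs_ln_ln_inverse_alpha_one_ratio_less:
  assumes "N \<ge> 1" "i + 1 < n + m"
  shows "\<bar>ln (ln (1 / alpha N i) / ln (1 / alpha 1 i))\<bar> < 2 powr (real i - real (n + m) + 1)"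
proof -
  have "\<bar>ln (ln (1 / alpha N i) / ln (1 / alpha 1 i))\<bar> \<le> \<bar>ln (alpha N (Suc i) / alpha 1 (Suc i))\<bar>"
    using assms by (intro abs_ln_ln_inverse_alpha_ratio_le) simp_all
  also have "\<dots> < 2 powr (real (Suc i) - real (n + m))"
    using assms by (intro abs_ln_alpha_one_ratio_less) simp_all
  finally show ?thesis
    by (simp add: add.commute add_diff_eq)
qed

end

theorem mainTheorem5:
  fixes a :: "nat \<Rightarrow> nat" and n m N :: nat
  assumes apos: "\<forall>k\<le>n. a k > 0"
    and m: "m \<ge> 1"
    and N: "N \<ge> 1"
  shows
    "(\<forall>i\<le>n + m. \<bar>ln (cf_alpha (beta_digits a n m N) i / cf_alpha (beta_digits a n m (N + 1)) i)\<bar>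
        < 2 powr (real i - real (n + m)) / real N)
   \<and> (\<forall>i<n + m. \<bar>ln (cf_alpha (beta_digits a n m N) i / cf_alpha (beta_digits a n m 1) i)\<bar>
        < 2 powr (real i - real (n + m)))
   \<and> (\<forall>i<n + m. \<bar>ln (ln (1 / cf_alpha (beta_digits a n m N) i) / ln (1 / cf_alpha (beta_digits a n m (N + 1)) i))\<bar>
        < 2 powr (real i - real (n + m) + 1))
   \<and> (\<forall>i. i + 1 < n + m \<longrightarrow> \<bar>ln (ln (1 / cf_alpha (beta_digits a n m N) i) / ln (1 / cf_alpha (beta_digits a n m 1) i))\<bar>
        < 2 powr (real i - real (n + m) + 1))"
  using abs_ln_alpha_Suc_ratio_less[OF apos m N] abs_ln_alpha_one_ratio_less[OF apos m N]
    abs_ln_ln_inverse_alpha_Suc_ratio_less[OF apos m N]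
    abs_ln_ln_inverse_alpha_one_ratio_less[OF apos m N]
  by blast

end
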